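(* With $h$ as defined in the context, the function $x\mapsto h(x)/(x+1)$ is strictly decreasing on $(-1,\infty)$ and the function $x\mapsto h(x)(x+1)$ is strictly increasing on $(-1,\infty)$.
   Context: Let $u_n=(-1)^{s_2(n)}$, where $s_2(n)$ is the sum of the binary digits of the non-negative integer $n$ (Thue–Morse sequence with values $\pm1$). For real $x>-2$ define $h(x)=\prod_{n=1}^\infty\left(\frac{2n+x}{2n+1+x}\right)^{u_n}$ (limit of partial products; it converges). *)

theory Defs
  imports "HOL-Analysis.Analysis"
begin

fun s2 :: "nat \<Rightarrow> nat" where
  "s2 n = (if n = 0 then 0 else n mod 2 + s2 (n div 2))"

definition tm :: "nat \<Rightarrow> int" where
  "tm n = (-1) ^ s2 n"

definition h :: "real \<Rightarrow> real" where
  "h x = lim (\<lambda>N. \<Prod>n\<in>{1..N}. ((2 * real n + x) / (2 * real n + 1 + x)) powi tm n)"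

end

(* Taking logarithms, ln h(x) is the convergent series of u n * ln ((2n + x) / (2n + 1 + x)).
   For -1 < x < y each term ln ((2n + y) / (2n + 1 + y)) - ln ((2n + x) / (2n + 1 + x)) is
   nonnegative, and these differences sum to at most (ln (1 + y) - ln (1 + x)) / 2. Since the u n
   are signs, |ln h(y) - ln h(x)| is at most half of ln ((y + 1) / (x + 1)), so h(y) / h(x) lies
   strictly between (x + 1) / (y + 1) and (y + 1) / (x + 1): that is both monotonicity claims. *)

theory Submission
  imports Defs "HOL-Probability.Characteristic_Functions"
begin

lemma tm_double: "tm (2 * k) = tm k"
  using s2.simps[of "2 * k"] by (cases "k = 0") (auto simp: tm_def simp del: s2.simps)

lemma tm_double_Suc: "tm (Suc (2 * k)) = - tm k"
  using s2.simps[of "Suc (2 * k)"] by (simp add: tm_def del: s2.simps)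

lemma abs_tm [simp]: "\<bar>real_of_int (tm n)\<bar> = 1"
  by (simp add: tm_def del: s2.simps)

lemma sums_of_pair_sums:
  fixes f :: "nat \<Rightarrow> 'a::real_normed_vector"
  assumes "f \<longlonglongrightarrow> 0" and "(\<lambda>k. f (2 * k) + f (2 * k + 1)) sums s"
  shows "f sums s"
  unfolding sums_def
proof (rule limseq_even_odd)
  have pairs: "(\<Sum>n<2 * K. f n) = (\<Sum>k<K. f (2 * k) + f (2 * k + 1))" for K
    by (induction K) (simp_all add: algebra_simps)
  show even: "(\<lambda>K. \<Sum>n<2 * K. f n) \<longlonglongrightarrow> s"
    using assms(2) by (simp add: pairs sums_def)
  have "(\<lambda>K. f (2 * K)) \<longlonglongrightarrow> 0"
    using LIMSEQ_subseq_LIMSEQ[OF assms(1), of "\<lambda>K. 2 * K"]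
    by (simp add: strict_mono_def o_def)
  from tendsto_add[OF even this]
  show "(\<lambda>K. \<Sum>n<2 * K + 1. f n) \<longlonglongrightarrow> s" by simp
qed

text \<open>Pairing the terms 2k and 2k+1, whose signs are opposite, leaves a series dominated
  by the telescoping series of a (2k+2) - a (2k).\<close>
lemma summable_tm_mult:
  fixes a :: "nat \<Rightarrow> real"
  assumes mono: "mono_on {1..} a" and lim: "a \<longlonglongrightarrow> 0"
  shows "summable (\<lambda>n. of_int (tm n) * a n)"
proof -
  let ?f = "\<lambda>n. of_int (tm n) * a n"
  have pair: "?f (2 * k) + ?f (2 * k + 1) = of_int (tm k) * (a (2 * k) - a (2 * k + 1))" for k
    unfolding Suc_eq_plus1[symmetric] tm_double tm_double_Suc by (simp add: algebra_simps)
  have "(\<lambda>k. a (2 * k)) \<longlonglongrightarrow> 0"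
    using LIMSEQ_subseq_LIMSEQ[OF lim, of "\<lambda>k. 2 * k"] by (simp add: strict_mono_def o_def)
  then have "summable (\<lambda>k. of_int (tm k) * (a (2 * k) - a (2 * k + 1)))"
  proof (rule summable_comparison_test'[where N = 1, OF telescope_summable])
    fix k :: nat assume "1 \<le> k"
    then have "a (2 * k) \<le> a (2 * k + 1)" "a (2 * k + 1) \<le> a (2 * Suc k)"
      by (auto intro: mono_onD[OF mono])
    then show "norm (of_int (tm k) * (a (2 * k) - a (2 * k + 1))) \<le> a (2 * Suc k) - a (2 * k)"
      by (simp add: abs_mult)
  qed
  moreover have "(\<lambda>n. norm (?f n)) \<longlonglongrightarrow> 0"
    using tendsto_norm_zero[OF lim] by (simp add: abs_mult)
  then have "?f \<longlonglongrightarrow> 0"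
    by (rule tendsto_norm_zero_cancel)
  ultimately show ?thesis
    unfolding summable_def pair[symmetric] by (blast intro: sums_of_pair_sums)
qed

definition ln_factor :: "real \<Rightarrow> nat \<Rightarrow> real" where
  "ln_factor x n = ln ((2 * real n + x) / (2 * real n + 1 + x))"

lemma ln_frac_Suc_mono:
  fixes p q :: real
  assumes "0 < p" "p \<le> q"
  shows "ln (p / (p + 1)) \<le> ln (q / (q + 1))"
proof -
  have "p / (p + 1) \<le> q / (q + 1)"
    using assms by (simp add: divide_simps algebra_simps)
  then show ?thesis using assms by simp
qed

lemma ln_factor_mono:
  assumes "-1 < x"
  shows "mono_on {1..} (ln_factor x)"
proof (rule mono_onI)
  fix n m :: nat assume "n \<in> {1..}" "m \<in> {1..}" "n \<le> m"
  with assms show "ln_factor x n \<le> ln_factor x m"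
    using ln_frac_Suc_mono[of "2 * real n + x" "2 * real m + x"]
    by (simp add: ln_factor_def add_ac)
qed

lemma ln_factor_mono_left:
  assumes "-1 < x" "x \<le> y" "1 \<le> n"
  shows "ln_factor x n \<le> ln_factor y n"
  using assms ln_frac_Suc_mono[of "2 * real n + x" "2 * real n + y"]
  by (simp add: ln_factor_def add_ac)

lemma ln_factor_tendsto_zero: "ln_factor x \<longlonglongrightarrow> 0"
proof -
  have large: "eventually (\<lambda>n. \<bar>x\<bar> < real n) sequentially"
    using eventually_gt_at_top[of "nat \<lceil>\<bar>x\<bar>\<rceil>"] by eventually_elim linarith
  have "filterlim (\<lambda>n. 2 * real n + 1 + x) at_top sequentially"
    by (rule filterlim_at_top_mono[OF filterlim_real_sequentially])
      (use large in \<open>eventually_elim, simp\<close>)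
  then have "(\<lambda>n. 1 - inverse (2 * real n + 1 + x)) \<longlonglongrightarrow> 1 - 0"
    by (intro tendsto_diff tendsto_const tendsto_inverse_0_at_top)
  moreover have "eventually (\<lambda>n. 1 - inverse (2 * real n + 1 + x)
                   = (2 * real n + x) / (2 * real n + 1 + x)) sequentially"
    using large by eventually_elim (simp add: field_simps)
  ultimately have "(\<lambda>n. (2 * real n + x) / (2 * real n + 1 + x)) \<longlonglongrightarrow> 1"
    by (simp add: tendsto_cong)
  from tendsto_ln[OF this] show ?thesis
    by (simp add: ln_factor_def [abs_def])
qed

text \<open>After exponentiating, this is q^2 (p^2 - 1) \<le> p^2 (q^2 - 1).\<close>
lemma ln_frac_Suc_diff_le:
  fixes p q :: real
  assumes "1 < p" "p \<le> q"
  shows "2 * (ln (q / (q + 1)) - ln (p / (p + 1)))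
           \<le> (ln (q - 1) - ln (p - 1)) - (ln (q + 1) - ln (p + 1))"
proof -
  have "1 < p\<^sup>2" "p\<^sup>2 \<le> q\<^sup>2"
    using assms by (simp_all add: one_less_power power_mono)
  then have "0 < q\<^sup>2 * (p\<^sup>2 - 1)" "q\<^sup>2 * (p\<^sup>2 - 1) \<le> p\<^sup>2 * (q\<^sup>2 - 1)"
    using assms by (intro mult_pos_pos, simp_all add: algebra_simps)
  then have "ln (q\<^sup>2 * (p\<^sup>2 - 1)) \<le> ln (p\<^sup>2 * (q\<^sup>2 - 1))"
    by simp
  moreover have "q\<^sup>2 * (p\<^sup>2 - 1) = q * q * ((p - 1) * (p + 1))"
    and "p\<^sup>2 * (q\<^sup>2 - 1) = p * p * ((q - 1) * (q + 1))"
    by (simp_all add: algebra_simps power2_eq_square)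
  ultimately show ?thesis
    using assms by (simp add: ln_mult ln_div)
qed

text \<open>By the previous lemma with p = 2n + x and q = 2n + y, twice the n-th term is at most
  g (2n - 1) - g (2n + 1) for g t = ln (t + y) - ln (t + x), so the bound telescopes.\<close>
lemma sum_ln_factor_diff_le:
  assumes "-1 < x" "x \<le> y"
  shows "2 * (\<Sum>n = 1..N. ln_factor y n - ln_factor x n)
           \<le> (ln (1 + y) - ln (1 + x)) - (ln (2 * real N + 1 + y) - ln (2 * real N + 1 + x))"
proof (induction N)
  case (Suc N)
  define p where "p = 2 * real (Suc N) + x"
  define q where "q = 2 * real (Suc N) + y"
  have "1 < p" "p \<le> q"
    using assms by (auto simp: p_def q_def)
  from ln_frac_Suc_diff_le[OF this]
  have "2 * (ln_factor y (Suc N) - ln_factor x (Suc N))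
          \<le> (ln (q - 1) - ln (p - 1)) - (ln (q + 1) - ln (p + 1))"
    by (simp add: ln_factor_def p_def q_def add_ac)
  moreover have "q - 1 = 2 * real N + 1 + y" "p - 1 = 2 * real N + 1 + x"
    "q + 1 = 2 * real (Suc N) + 1 + y" "p + 1 = 2 * real (Suc N) + 1 + x"
    by (simp_all add: p_def q_def)
  ultimately show ?case
    using Suc by (simp add: sum.cl_ivl_Suc algebra_simps)
qed simp

definition ln_h :: "real \<Rightarrow> real" where
  "ln_h x = (\<Sum>n. of_int (tm (Suc n)) * ln_factor x (Suc n))"

lemma summable_ln_h:
  assumes "-1 < x"
  shows "summable (\<lambda>n. of_int (tm (Suc n)) * ln_factor x (Suc n))"
  using summable_tm_mult[OF ln_factor_mono[OF assms] ln_factor_tendsto_zero]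
  by (subst summable_Suc_iff)

lemma h_eq_exp_ln_h:
  assumes "-1 < x"
  shows "h x = exp (ln_h x)"
proof -
  have "(\<Prod>n = 1..N. ((2 * real n + x) / (2 * real n + 1 + x)) powi tm n)
          = exp (\<Sum>n<N. of_int (tm (Suc n)) * ln_factor x (Suc n))" for N
  proof -
    have "((2 * real n + x) / (2 * real n + 1 + x)) powi tm n = exp (of_int (tm n) * ln_factor x n)"
      if "1 \<le> n" for n
    proof -
      have "0 < (2 * real n + x) / (2 * real n + 1 + x)"
        using assms that by simp
      then show ?thesis
        by (simp add: ln_factor_def exp_power_int[symmetric])
    qed
    then have "(\<Prod>n = 1..N. ((2 * real n + x) / (2 * real n + 1 + x)) powi tm n)
                 = (\<Prod>n = 1..N. exp (of_int (tm n) * ln_factor x n))"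
      by (intro prod.cong) simp_all
    also have "\<dots> = exp (\<Sum>n<N. of_int (tm (Suc n)) * ln_factor x (Suc n))"
      by (simp add: exp_sum prod.atLeast1_atMost_eq)
    finally show ?thesis .
  qed
  moreover have "(\<lambda>N. exp (\<Sum>n<N. of_int (tm (Suc n)) * ln_factor x (Suc n))) \<longlonglongrightarrow> exp (ln_h x)"
    unfolding ln_h_def by (intro tendsto_exp summable_LIMSEQ summable_ln_h assms)
  ultimately show ?thesis
    unfolding h_def by (simp add: limI)
qed

lemma abs_ln_h_diff_le:
  assumes "-1 < x" "x \<le> y"
  shows "2 * \<bar>ln_h y - ln_h x\<bar> \<le> ln (1 + y) - ln (1 + x)"
proof -
  define d where "d n = ln_factor y (Suc n) - ln_factor x (Suc n)" for n
  have d_nonneg: "0 \<le> d n" for n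
    using ln_factor_mono_left[OF assms] by (simp add: d_def)
  have partial: "2 * \<bar>\<Sum>n<N. of_int (tm (Suc n)) * d n\<bar> \<le> ln (1 + y) - ln (1 + x)" for N
  proof -
    have "2 * \<bar>\<Sum>n<N. of_int (tm (Suc n)) * d n\<bar> \<le> 2 * (\<Sum>n<N. \<bar>of_int (tm (Suc n)) * d n\<bar>)"
      by (simp add: sum_abs)
    also have "\<dots> = 2 * (\<Sum>n<N. d n)"
      by (simp add: abs_mult d_nonneg)
    also have "\<dots> = 2 * (\<Sum>n = 1..N. ln_factor y n - ln_factor x n)"
      by (simp add: d_def sum.atLeast1_atMost_eq)
    also have "\<dots> \<le> ln (1 + y) - ln (1 + x)"
    proof -
      have "ln (2 * real N + 1 + x) \<le> ln (2 * real N + 1 + y)"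
        using assms by simp
      then show ?thesis
        using sum_ln_factor_diff_le[OF assms, of N] by linarith
    qed
    finally show ?thesis .
  qed
  have "-1 < y" using assms by simp
  have "(\<lambda>N. \<Sum>n<N. of_int (tm (Suc n)) * d n) \<longlonglongrightarrow> ln_h y - ln_h x"
    unfolding ln_h_def d_def right_diff_distrib sum_subtractf
    by (intro tendsto_diff summable_LIMSEQ summable_ln_h assms \<open>-1 < y\<close>)
  from tendsto_mult[OF tendsto_const tendsto_rabs[OF this], of 2] show ?thesis
    by (rule LIMSEQ_le_const2) (use partial in auto)
qed

lemma h_ratio_bounds:
  assumes "-1 < x" "x < y"
  shows "(x + 1) / (y + 1) < h y / h x \<and> h y / h x < (y + 1) / (x + 1)"
proof -
  define D where "D = ln (1 + y) - ln (1 + x)"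
  have "0 < D" using assms by (simp add: D_def)
  have exp_D: "exp D = (y + 1) / (x + 1)"
    using assms by (simp add: D_def exp_diff add.commute)
  have ratio: "h y / h x = exp (ln_h y - ln_h x)"
    using assms by (simp add: h_eq_exp_ln_h exp_diff)
  have "2 * \<bar>ln_h y - ln_h x\<bar> \<le> D"
    using abs_ln_h_diff_le[of x y] assms by (simp add: D_def)
  then have "\<bar>ln_h y - ln_h x\<bar> < D"
    using \<open>0 < D\<close> by (smt (verit))
  then have "exp (- D) < exp (ln_h y - ln_h x)" "exp (ln_h y - ln_h x) < exp D"
    by simp_all
  then show ?thesis
    by (simp add: ratio exp_D exp_minus inverse_eq_divide)
qed

theorem theorem1:
  shows "strict_antimono_on {-1<..} (\<lambda>x. h x / (x + 1)) \<and>
         strict_mono_on {-1<..} (\<lambda>x. h x * (x + 1))"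
proof -
  have "h y / (y + 1) < h x / (x + 1) \<and> h x * (x + 1) < h y * (y + 1)"
    if "-1 < x" "x < y" for x y
  proof -
    have "0 < h x" "0 < x + 1" "0 < y + 1"
      using that by (simp_all add: h_eq_exp_ln_h)
    then show ?thesis
      using h_ratio_bounds[OF that] by (simp add: divide_simps mult.commute)
  qed
  then show ?thesis
    by (auto simp: monotone_on_def)
qed

end
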